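(* Suppose $K$ and $t=KM/N$ are both even, with $2\le t\le K$. Then the D2D coded caching rate $R=N/M-1$ is achievable with some subpacketization $F$ satisfying $F\le \tfrac12 F_{\rm JCM}$.
   Context: D2D coded caching setting: there are $N\ge 1$ files $W_1,\dots,W_N$ and $K\ge 2$ users, each with a cache of size $M$ files, $0<M\le N$, and $t:=KM/N$ is assumed to be a positive integer. A D2D coded caching scheme with (uncoded placement and) subpacketization $F\in\mathbb{N}_+$ is defined as follows. Fix a packet size $b\ge 1$; each file is a sequence of $F$ packets $W_n=(W_n^{(1)},\dots,W_n^{(F)})$, $W_n^{(j)}\in\{0,1\}^b$. Placement: each user $k\in[K]$ stores the packets $\{W_n^{(j)}:(n,j)\in Z_k\}$ for a fixed index set $Z_k\subseteq[N]\times[F]$ with $|Z_k|\le MF$ (independent of demands and file contents). Delivery: for every demand vector $\mathbf d=(d_1,\dots,d_K)\in[N]^K$, each user $k$ broadcasts to all other users $\ell_k(\mathbf d)\in\mathbb{N}$ blocks in $\{0,1\}^b$, each a deterministic function of the packets stored by user $k$; it is required that for all file contents each user $k$ can recover all $F$ packets of $W_{d_k}$ from its stored packets and the blocks sent by the other users. The rate is $R=\max_{\mathbf d}\frac{1}{F}\sum_{k=1}^K\ell_k(\mathbf d)$ (transmitted bits normalized by the file size $Fb$). The rate $R$ is achievable with subpacketization $F$ if such a scheme with rate $R$ exists for every packet size $b\ge 1$. Define $F_{\rm JCM}:=t\binom{K}{t}$. *)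

theory Defs
  imports Complex_Main "HOL-Library.FuncSet"
begin

text \<open>A packet index is a pair (n, j) with n the file and j the packet number.\<close>

definition demands :: "nat \<Rightarrow> nat \<Rightarrow> (nat \<Rightarrow> nat) set" where
  "demands N K = ({1..K} \<rightarrow>\<^sub>E {1..N})"

definition contents :: "nat \<Rightarrow> nat \<Rightarrow> nat \<Rightarrow> (nat \<times> nat \<Rightarrow> bool list) set" where
  "contents N F b = {W. \<forall>n\<in>{1..N}. \<forall>j\<in>{1..F}. length (W (n, j)) = b}"

text \<open>Z k : cached index set of user k.  l k d : number of blocks broadcast by user k for demand d.
  enc k d : encoding map of user k, applied to the stored packets (the content restricted to Z k).
  dec k d : decoding map of user k, from its stored packets and the blocks sent by the other users
  to the packets (indexed by j) of the requested file.\<close>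

definition d2d_scheme ::
  "nat \<Rightarrow> nat \<Rightarrow> real \<Rightarrow> nat \<Rightarrow> nat \<Rightarrow> (nat \<Rightarrow> (nat \<times> nat) set) \<Rightarrow> (nat \<Rightarrow> (nat \<Rightarrow> nat) \<Rightarrow> nat)
   \<Rightarrow> (nat \<Rightarrow> (nat \<Rightarrow> nat) \<Rightarrow> (nat \<times> nat \<Rightarrow> bool list) \<Rightarrow> bool list list)
   \<Rightarrow> (nat \<Rightarrow> (nat \<Rightarrow> nat) \<Rightarrow> (nat \<times> nat \<Rightarrow> bool list) \<Rightarrow> (nat \<Rightarrow> bool list list) \<Rightarrow> nat \<Rightarrow> bool list)
   \<Rightarrow> bool" where
  "d2d_scheme N K M F b Z l enc dec \<longleftrightarrow>
     (\<forall>k\<in>{1..K}. Z k \<subseteq> {1..N} \<times> {1..F} \<and> real (card (Z k)) \<le> M * real F) \<and>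
     (\<forall>d\<in>demands N K. \<forall>W\<in>contents N F b.
        (\<forall>k\<in>{1..K}. length (enc k d (restrict W (Z k))) = l k d \<and>
                    (\<forall>x\<in>set (enc k d (restrict W (Z k))). length x = b)) \<and>
        (\<forall>k\<in>{1..K}. \<forall>j\<in>{1..F}.
           dec k d (restrict W (Z k))
               (\<lambda>k'. if k' \<in> {1..K} - {k} then enc k' d (restrict W (Z k')) else [])
               j = W (d k, j)))"

definition d2d_rate :: "nat \<Rightarrow> nat \<Rightarrow> nat \<Rightarrow> (nat \<Rightarrow> (nat \<Rightarrow> nat) \<Rightarrow> nat) \<Rightarrow> real" where
  "d2d_rate N K F l = Max ((\<lambda>d. real (\<Sum>k\<in>{1..K}. l k d) / real F) ` demands N K)"

definition d2d_achievable :: "nat \<Rightarrow> nat \<Rightarrow> real \<Rightarrow> nat \<Rightarrow> real \<Rightarrow> bool" where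
  "d2d_achievable N K M F R \<longleftrightarrow>
     (\<forall>b\<ge>1. \<exists>Z l enc dec. d2d_scheme N K M F b Z l enc dec \<and> d2d_rate N K F l = R)"

end

theory Submission
  imports Defs "HOL-Combinatorics.Transposition"
begin

text \<open>Split the users into two halves of size K/2. For a t-set T of users let minority T be
  its part in the half it meets less. The subfile of each file indexed by T has
  |minority T| \<le> t/2 packets, all cached by the members of T, so F \<le> t/2 \<cdot> (K choose t).
  Since t is even, every (t+1)-set S meets the halves unevenly, and only the members of
  minority S transmit for S: member s sends the XOR, over k \<in> S - {s}, of the packet of
  subfile S - {k} requested by k whose number is the rank of s in minority S - {k}.
  Removing any k from S leaves |minority S - {k}| = |minority (S - {k})|, so these ranks
  run exactly over the packets of subfile S - {k}: user k receives each missing packet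
  once, and every other summand of that XOR lies in a subfile containing k. Double counting gives
  t \<cdot> (number of blocks) = (K - t) \<cdot> F, i.e. rate K/t - 1 = N/M - 1. Transpositions inside a
  half and the reflection i \<mapsto> K + 1 - i preserve the construction, so all users cache equally
  much, namely the fraction t/K = M/N of every file.\<close>

lemma sum_card_incidence:
  assumes "finite U" "finite P"
  shows "(\<Sum>u\<in>U. card {x\<in>P. u \<in> f x}) = (\<Sum>x\<in>P. card (U \<inter> f x))"
proof -
  have "(\<Sum>u\<in>U. card {x\<in>P. u \<in> f x}) = (\<Sum>u\<in>U. \<Sum>x\<in>P. of_bool (u \<in> f x))"
    using assms by (simp add: Collect_conj_eq Int_commute)
  also have "\<dots> = (\<Sum>x\<in>P. \<Sum>u\<in>U. of_bool (u \<in> f x))"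
    by (rule sum.swap)
  also have "\<dots> = (\<Sum>x\<in>P. card (U \<inter> f x))"
    using assms by simp
  finally show ?thesis .
qed

lemma sum_card_Diff_singleton:
  assumes "finite S" "Y \<subseteq> S"
  shows "(\<Sum>k\<in>S. card (Y - {k})) = card Y * (card S - 1)"
proof -
  have fin: "finite Y" using assms finite_subset by blast
  have "(\<Sum>k\<in>S. card (Y - {k})) = (\<Sum>k\<in>S. card {y\<in>Y. k \<in> S - {y}})"
    by (intro sum.cong refl arg_cong[where f = card]) auto
  also have "\<dots> = (\<Sum>y\<in>Y. card (S \<inter> (S - {y})))"
    by (rule sum_card_incidence[OF assms(1) fin])
  also have "\<dots> = card Y * (card S - 1)"
    using assms by (simp add: Int_absorb1 subset_eq)
  finally show ?thesis .
qed

lemma sum_subsets_remove_one: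
  fixes g :: "'a set \<Rightarrow> nat"
  assumes "finite U"
  shows "(\<Sum>S | S \<subseteq> U \<and> card S = Suc m. \<Sum>k\<in>S. g (S - {k}))
       = (\<Sum>T | T \<subseteq> U \<and> card T = m. (card U - m) * g T)"
proof -
  let ?S = "{S. S \<subseteq> U \<and> card S = Suc m}" and ?T = "{T. T \<subseteq> U \<and> card T = m}"
  have finS: "finite ?S" and finT: "finite ?T"
    using assms by (auto intro: finite_subset[of _ "Pow U"])
  have finS_elem: "\<forall>S\<in>?S. finite S" and finT_diff: "\<forall>T\<in>?T. finite (U - T)"
    using assms by (auto intro: finite_subset)
  have "bij_betw (\<lambda>(T, k). (insert k T, k)) (SIGMA T:?T. U - T) (SIGMA S:?S. S)"
    by (rule bij_betw_byWitness[where f' = "\<lambda>(S, k). (S - {k}, k)"])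
      (use assms in \<open>auto simp: card_insert_if finite_subset card_Diff_singleton_if\<close>)
  then have "(\<Sum>(S, k)\<in>(SIGMA S:?S. S). g (S - {k})) = (\<Sum>(T, k)\<in>(SIGMA T:?T. U - T). g T)"
    by (subst sum.reindex_bij_betw[symmetric]) (auto simp: split_def intro!: sum.cong)
  then have "(\<Sum>S\<in>?S. \<Sum>k\<in>S. g (S - {k})) = (\<Sum>T\<in>?T. \<Sum>k\<in>U - T. g T)"
    by (simp only: sum.Sigma[OF finS finS_elem] sum.Sigma[OF finT finT_diff])
  also have "\<dots> = (\<Sum>T\<in>?T. (card U - m) * g T)"
    using assms by (intro sum.cong) (auto simp: card_Diff_subset finite_subset)
  finally show ?thesis .
qed

definition rank :: "'a::linorder \<Rightarrow> 'a set \<Rightarrow> nat" where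
  "rank s Y = card {y\<in>Y. y < s}"

lemma rank_strict_mono:
  assumes "finite Y" "x \<in> Y" "x < y"
  shows "rank x Y < rank y Y"
  unfolding rank_def using assms by (intro psubset_card_mono) auto

lemma bij_betw_rank:
  assumes "finite Y"
  shows "bij_betw (\<lambda>s. rank s Y) Y {..<card Y}"
proof -
  have inj: "inj_on (\<lambda>s. rank s Y) Y"
    by (rule linorder_inj_onI) (use assms rank_strict_mono in fastforce)+
  have "(\<lambda>s. rank s Y) ` Y \<subseteq> {..<card Y}"
    unfolding rank_def using assms by (auto intro!: psubset_card_mono)
  moreover have "card ((\<lambda>s. rank s Y) ` Y) = card {..<card Y}"
    using inj by (simp add: card_image)
  ultimately show ?thesis
    using inj by (simp add: bij_betw_def card_subset_eq)
qed

definition some_bij :: "'i set \<Rightarrow> 'a set \<Rightarrow> 'i \<Rightarrow> 'a" where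
  "some_bij I X = (SOME f. bij_betw f I X)"

lemma bij_betw_some_bij:
  assumes "finite I" "finite X" "card I = card X"
  shows "bij_betw (some_bij I X) I X"
  unfolding some_bij_def using finite_same_card_bij[OF assms] by (rule someI_ex)

lemma the_inv_into_bij_betw:
  assumes "bij_betw f A B" "y \<in> B"
  shows "the_inv_into A f y \<in> A" "f (the_inv_into A f y) = y"
  using bij_betwE[OF bij_betw_the_inv_into[OF assms(1)]] f_the_inv_into_f_bij_betw assms by auto

definition xor_list :: "bool list \<Rightarrow> bool list \<Rightarrow> bool list" where
  "xor_list xs ys = map2 (\<noteq>) xs ys"

definition xor_sum :: "nat \<Rightarrow> 'a set \<Rightarrow> ('a \<Rightarrow> bool list) \<Rightarrow> bool list" where
  "xor_sum b A f = map (\<lambda>p. odd (card {x\<in>A. f x ! p})) [0..<b]"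

lemma xor_sum_cong: "(\<And>x. x \<in> A \<Longrightarrow> f x = g x) \<Longrightarrow> xor_sum b A f = xor_sum b A g"
  unfolding xor_sum_def by (metis (mono_tags, lifting) Collect_cong)

lemma xor_sum_remove:
  assumes "finite A" "a \<in> A" "length (f a) = b"
  shows "xor_list (xor_sum b A f) (xor_sum b (A - {a}) f) = f a"
proof (rule nth_equalityI)
  fix p assume "p < length (xor_list (xor_sum b A f) (xor_sum b (A - {a}) f))"
  then have p: "p < b" by (simp add: xor_list_def xor_sum_def)
  have "{x\<in>A. f x ! p} = (if f a ! p then insert a {x\<in>A - {a}. f x ! p} else {x\<in>A - {a}. f x ! p})"
    using assms(2) by auto
  then show "xor_list (xor_sum b A f) (xor_sum b (A - {a}) f) ! p = f a ! p"
    using p assms(1) by (simp add: xor_list_def xor_sum_def)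
qed (simp add: xor_list_def xor_sum_def assms(3))

lemma card_smaller_Diff_singleton:
  assumes "finite P" "finite Q" "P \<inter> Q = {}" "k \<in> P \<union> Q" "card P \<noteq> card Q"
  shows "card ((if card P < card Q then P else Q) - {k}) = min (card (P - {k})) (card (Q - {k}))"
  using assms by (cases "k \<in> P") (auto simp: card_Diff_singleton_if card_gt_0_iff)

locale two_group_scheme =
  fixes K t :: nat
  assumes even_K: "even K" and even_t: "even t" and t_ge_2: "2 \<le> t" and t_le_K: "t \<le> K"
begin

definition lower_half :: "nat set" where
  "lower_half = {1..K div 2}"

definition upper_half :: "nat set" where
  "upper_half = {K div 2 + 1..K}"

definition user_sets :: "nat \<Rightarrow> nat set set" where
  "user_sets m = {T. T \<subseteq> {1..K} \<and> card T = m}"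

definition minority :: "nat set \<Rightarrow> nat set" where
  "minority T = (if card (T \<inter> lower_half) < card (T \<inter> upper_half)
                 then T \<inter> lower_half else T \<inter> upper_half)"

lemma halves_disjoint: "lower_half \<inter> upper_half = {}"
  by (auto simp: lower_half_def upper_half_def)

lemma halves_Un: "lower_half \<union> upper_half = {1..K}"
  by (auto simp: lower_half_def upper_half_def)

lemma finite_user_sets: "finite (user_sets m)"
  unfolding user_sets_def by (rule finite_subset[of _ "Pow {1..K}"]) auto

lemma user_setsD:
  assumes "T \<in> user_sets m"
  shows "T \<subseteq> {1..K}" "card T = m" "finite T"
  using assms finite_subset[of T "{1..K}"] by (auto simp: user_sets_def)

lemma card_halves:
  assumes "T \<subseteq> {1..K}"
  shows "card (T \<inter> lower_half) + card (T \<inter> upper_half) = card T"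
proof -
  have "finite T"
    using assms finite_subset by blast
  then have "card (T \<inter> lower_half \<union> T \<inter> upper_half) = card (T \<inter> lower_half) + card (T \<inter> upper_half)"
    using halves_disjoint by (intro card_Un_disjoint) auto
  moreover have "T \<inter> lower_half \<union> T \<inter> upper_half = T"
    using assms halves_Un by blast
  ultimately show ?thesis
    by simp
qed

lemma card_minority: "card (minority T) = min (card (T \<inter> lower_half)) (card (T \<inter> upper_half))"
  by (simp add: minority_def)

lemma minority_subset: "minority T \<subseteq> T"
  by (auto simp: minority_def)

lemma card_minority_Diff:
  assumes "S \<in> user_sets (Suc t)" "k \<in> S"
  shows "card (minority S - {k}) = card (minority (S - {k}))"
proof -
  have "card (S \<inter> lower_half) \<noteq> card (S \<inter> upper_half)"
    using card_halves[OF user_setsD(1)[OF assms(1)]] user_setsD(2)[OF assms(1)] even_t by presburger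
  moreover have "k \<in> S \<inter> lower_half \<union> S \<inter> upper_half"
    using assms user_setsD(1)[OF assms(1)] halves_Un by blast
  ultimately have "card (minority S - {k}) = min (card (S \<inter> lower_half - {k})) (card (S \<inter> upper_half - {k}))"
    unfolding minority_def using user_setsD(3)[OF assms(1)] halves_disjoint
    by (intro card_smaller_Diff_singleton) auto
  moreover have "(S - {k}) \<inter> lower_half = S \<inter> lower_half - {k}"
    and "(S - {k}) \<inter> upper_half = S \<inter> upper_half - {k}" by auto
  ultimately show ?thesis
    by (simp only: card_minority)
qed

definition packets :: "(nat set \<times> nat) set" where
  "packets = (SIGMA T:user_sets t. {..<card (minority T)})"

definition F :: nat where
  "F = card packets"

definition pkt :: "nat \<Rightarrow> nat set \<times> nat" where
  "pkt = some_bij {1..F} packets"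

definition pkt_num :: "nat set \<times> nat \<Rightarrow> nat" where
  "pkt_num = the_inv_into {1..F} pkt"

lemma finite_packets: "finite packets"
  unfolding packets_def using finite_user_sets by blast

lemma card_packets: "card packets = (\<Sum>T\<in>user_sets t. card (minority T))"
  unfolding packets_def using finite_user_sets by simp

lemma bij_betw_pkt: "bij_betw pkt {1..F} packets"
  unfolding pkt_def F_def using finite_packets by (intro bij_betw_some_bij) auto

lemma pkt_in_packets: "j \<in> {1..F} \<Longrightarrow> pkt j \<in> packets"
  using bij_betw_pkt by (auto simp: bij_betw_def)

lemma pkt_num_pkt: "j \<in> {1..F} \<Longrightarrow> pkt_num (pkt j) = j"
  unfolding pkt_num_def using bij_betw_pkt by (simp add: bij_betw_def the_inv_into_f_f)

lemma pkt_num_in: "x \<in> packets \<Longrightarrow> pkt_num x \<in> {1..F}"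
  unfolding pkt_num_def using bij_betw_pkt bij_betw_the_inv_into bij_betwE by blast

lemma pkt_pkt_num: "x \<in> packets \<Longrightarrow> pkt (pkt_num x) = x"
  unfolding pkt_num_def using bij_betw_pkt by (rule f_the_inv_into_f_bij_betw)

lemma F_pos: "1 \<le> F"
proof -
  define T where "T = insert 1 {K + 2 - t..K}"
  have "1 \<in> T \<inter> lower_half" "K \<in> T \<inter> upper_half"
    using even_K t_ge_2 t_le_K by (auto simp: T_def lower_half_def upper_half_def)
  then have "0 < card (minority T)"
    unfolding card_minority by (auto simp: T_def card_gt_0_iff)
  moreover have "T \<in> user_sets t"
  proof -
    have "1 \<notin> {K + 2 - t..K}"
      using t_le_K by auto
    then have "card T = t"
      using t_ge_2 t_le_K by (simp add: T_def)
    moreover have "T \<subseteq> {1..K}"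
      using t_le_K t_ge_2 by (auto simp: T_def)
    ultimately show ?thesis
      by (simp add: user_sets_def)
  qed
  ultimately have "(T, 0) \<in> packets"
    by (simp add: packets_def)
  then show ?thesis
    unfolding F_def using finite_packets by (auto simp: Suc_le_eq card_gt_0_iff)
qed

lemma F_le: "2 * F \<le> t * (K choose t)"
proof -
  have "2 * F = (\<Sum>T\<in>user_sets t. 2 * card (minority T))"
    by (simp add: F_def card_packets sum_distrib_left)
  also have "\<dots> \<le> (\<Sum>T\<in>user_sets t. t)"
  proof (rule sum_mono)
    fix T assume "T \<in> user_sets t"
    then have "card (T \<inter> lower_half) + card (T \<inter> upper_half) = t"
      using card_halves user_setsD by metis
    then show "2 * card (minority T) \<le> t"
      by (simp add: card_minority)
  qed
  also have "\<dots> = t * (K choose t)"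
    by (simp add: user_sets_def n_subsets)
  finally show ?thesis .
qed

definition ncached :: "nat \<Rightarrow> nat" where
  "ncached k = card {x\<in>packets. k \<in> fst x}"

definition mirror :: "nat \<Rightarrow> nat" where
  "mirror i = (if i \<in> {1..K} then Suc K - i else i)"

lemma card_minority_image:
  assumes "inj \<pi>" and "\<And>x. (\<pi> x \<in> lower_half \<longleftrightarrow> x \<in> X) \<and> (\<pi> x \<in> upper_half \<longleftrightarrow> x \<in> Y)"
    and "{X, Y} = {lower_half, upper_half}"
  shows "card (minority (\<pi> ` T)) = card (minority T)"
proof -
  have "\<pi> ` T \<inter> lower_half = \<pi> ` (T \<inter> X)" "\<pi> ` T \<inter> upper_half = \<pi> ` (T \<inter> Y)"
    using assms(2) by auto
  then have "card (\<pi> ` T \<inter> lower_half) = card (T \<inter> X)" "card (\<pi> ` T \<inter> upper_half) = card (T \<inter> Y)"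
    using assms(1) by (simp_all add: card_image inj_on_subset)
  then show ?thesis
    using assms(3) by (auto simp: card_minority doubleton_eq_iff)
qed

lemma ncached_involution:
  assumes inv: "\<And>x. \<pi> (\<pi> x) = x" and into: "\<And>x. x \<in> {1..K} \<Longrightarrow> \<pi> x \<in> {1..K}"
    and preserves: "\<And>T. card (minority (\<pi> ` T)) = card (minority T)"
  shows "ncached (\<pi> k) = ncached k"
proof -
  have inj: "inj \<pi>"
    by (metis inv injI)
  define f where "f = (\<lambda>(T, i :: nat). (\<pi> ` T, i))"
  have f_f: "f (f x) = x" for x
    using inv by (cases x) (simp add: f_def image_comp comp_def)
  have f_packets: "f x \<in> packets" if x_packets: "x \<in> packets" for x
  proof -
    obtain T i where x: "x = (T, i)" "T \<in> user_sets t" "i < card (minority T)"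
      using x_packets by (cases x) (auto simp: packets_def)
    have "\<pi> ` T \<in> user_sets t"
      using x(2) into inj by (auto simp: user_sets_def card_image inj_on_subset)
    then show ?thesis
      using x preserves by (simp add: f_def packets_def)
  qed
  have f_maps: "f ` {x\<in>packets. j \<in> fst x} \<subseteq> {x\<in>packets. \<pi> j \<in> fst x}" for j
    using f_packets by (auto simp: f_def split: prod.splits)
  have "bij_betw f {x\<in>packets. k \<in> fst x} {x\<in>packets. \<pi> k \<in> fst x}"
    using f_maps[of k] f_maps[of "\<pi> k"] f_f inv by (intro bij_betw_byWitness[where f' = f]) auto
  then show ?thesis
    unfolding ncached_def by (simp add: bij_betw_same_card)
qed

lemma mirror_mirror: "mirror (mirror x) = x"
  by (auto simp: mirror_def)

lemma inj_mirror: "inj mirror"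
  by (metis injI mirror_mirror)

lemma mirror_into: "x \<in> {1..K} \<Longrightarrow> mirror x \<in> {1..K}"
  by (auto simp: mirror_def)

lemma mirror_halves:
  "(mirror x \<in> lower_half \<longleftrightarrow> x \<in> upper_half) \<and> (mirror x \<in> upper_half \<longleftrightarrow> x \<in> lower_half)"
  using even_K by (auto simp: mirror_def lower_half_def upper_half_def)

lemma ncached_eq_ncached_1:
  assumes "k \<in> {1..K}"
  shows "ncached k = ncached 1"
proof -
  have in_lower: "ncached k = ncached 1" if "k \<in> lower_half" for k
  proof -
    have "1 \<in> lower_half"
      using even_K t_ge_2 t_le_K by (auto simp: lower_half_def)
    then have halves: "(transpose 1 k x \<in> lower_half \<longleftrightarrow> x \<in> lower_half)
        \<and> (transpose 1 k x \<in> upper_half \<longleftrightarrow> x \<in> upper_half)" for x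
      using that halves_disjoint by (auto simp: transpose_def)
    have into: "transpose 1 k x \<in> {1..K}" if "x \<in> {1..K}" for x
      using that halves halves_Un by blast
    have "ncached (transpose 1 k 1) = ncached 1"
      by (rule ncached_involution[OF transpose_involutory into
            card_minority_image[OF inj_transpose halves refl]])
    then show ?thesis
      by simp
  qed
  have "ncached (mirror k) = ncached k"
    by (rule ncached_involution[OF mirror_mirror mirror_into
          card_minority_image[OF inj_mirror mirror_halves insert_commute]])
  then show ?thesis
    using assms halves_Un mirror_halves in_lower by (metis Un_iff)
qed

lemma K_ncached:
  assumes "k \<in> {1..K}"
  shows "K * ncached k = t * F"
proof -
  have "(\<Sum>k\<in>{1..K}. ncached k) = (\<Sum>k\<in>{1..K}. ncached 1)"
    by (rule sum.cong[OF refl ncached_eq_ncached_1])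
  then have "K * ncached 1 = (\<Sum>k\<in>{1..K}. ncached k)"
    by simp
  also have "\<dots> = (\<Sum>x\<in>packets. card ({1..K} \<inter> fst x))"
    unfolding ncached_def using finite_packets by (intro sum_card_incidence) auto
  also have "\<dots> = (\<Sum>x\<in>packets. t)"
    by (intro sum.cong) (auto simp: packets_def user_sets_def Int_absorb1)
  finally show ?thesis
    by (simp add: ncached_eq_ncached_1[OF assms] F_def)
qed

definition cache :: "nat \<Rightarrow> nat \<Rightarrow> (nat \<times> nat) set" where
  "cache N k = {(n, j). n \<in> {1..N} \<and> j \<in> {1..F} \<and> k \<in> fst (pkt j)}"

lemma card_cache: "card (cache N k) = N * ncached k"
proof -
  have "bij_betw pkt {j\<in>{1..F}. k \<in> fst (pkt j)} {x\<in>packets. k \<in> fst x}"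
    by (rule bij_betw_byWitness[where f' = pkt_num])
      (auto simp: pkt_num_pkt pkt_pkt_num pkt_in_packets dest: pkt_num_in)
  then have "card {j\<in>{1..F}. k \<in> fst (pkt j)} = ncached k"
    unfolding ncached_def by (rule bij_betw_same_card)
  moreover have "cache N k = {1..N} \<times> {j\<in>{1..F}. k \<in> fst (pkt j)}"
    by (auto simp: cache_def)
  ultimately show ?thesis
    by (simp add: card_cartesian_product)
qed

lemma card_cache_eq:
  assumes "real K * M = real t * real N" "k \<in> {1..K}"
  shows "real (card (cache N k)) = M * real F"
proof -
  have "real K * real (card (cache N k)) = real N * (real t * real F)"
    using K_ncached[OF assms(2)] unfolding card_cache by (metis of_nat_mult mult.left_commute)
  also have "\<dots> = real K * (M * real F)"
    using assms(1) by simp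
  finally show ?thesis
    using t_ge_2 t_le_K by simp
qed

lemma cached_packet:
  assumes "x \<in> packets" "u \<in> fst x" "n \<in> {1..N}"
  shows "(n, pkt_num x) \<in> cache N u"
  using assms pkt_num_in pkt_pkt_num by (simp add: cache_def)

definition sent :: "nat \<Rightarrow> nat set set" where
  "sent s = {S\<in>user_sets (Suc t). s \<in> minority S}"

lemma sum_card_sent: "(\<Sum>s\<in>{1..K}. card (sent s)) = (\<Sum>S\<in>user_sets (Suc t). card (minority S))"
proof -
  have "(\<Sum>s\<in>{1..K}. card (sent s)) = (\<Sum>S\<in>user_sets (Suc t). card ({1..K} \<inter> minority S))"
    unfolding sent_def using finite_user_sets by (intro sum_card_incidence) auto
  also have "\<dots> = (\<Sum>S\<in>user_sets (Suc t). card (minority S))"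
    using minority_subset user_setsD(1) by (intro sum.cong refl arg_cong[where f = card]) blast
  finally show ?thesis .
qed

lemma t_sum_card_sent: "t * (\<Sum>s\<in>{1..K}. card (sent s)) = (K - t) * F"
proof -
  have "t * (\<Sum>s\<in>{1..K}. card (sent s)) = (\<Sum>S\<in>user_sets (Suc t). \<Sum>k\<in>S. card (minority S - {k}))"
    unfolding sum_card_sent sum_distrib_left
    using user_setsD minority_subset by (intro sum.cong refl) (simp add: sum_card_Diff_singleton)
  also have "\<dots> = (\<Sum>S\<in>user_sets (Suc t). \<Sum>k\<in>S. card (minority (S - {k})))"
    using card_minority_Diff by simp
  also have "\<dots> = (\<Sum>T\<in>user_sets t. (K - t) * card (minority T))"
    unfolding user_sets_def using sum_subsets_remove_one[of "{1..K}" "\<lambda>T. card (minority T)" t] by simp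
  also have "\<dots> = (K - t) * F"
    by (simp add: F_def card_packets sum_distrib_left)
  finally show ?thesis .
qed

definition msg :: "nat \<Rightarrow> nat \<Rightarrow> nat set" where
  "msg s = some_bij {..<card (sent s)} (sent s)"

definition msg_index :: "nat \<Rightarrow> nat set \<Rightarrow> nat" where
  "msg_index s = the_inv_into {..<card (sent s)} (msg s)"

definition carried_packet :: "nat \<Rightarrow> nat set \<Rightarrow> nat \<Rightarrow> nat set \<times> nat" where
  "carried_packet s S k = (S - {k}, rank s (minority S - {k}))"

definition sender :: "nat \<Rightarrow> nat set \<Rightarrow> nat \<Rightarrow> nat" where
  "sender k T i = (let Y = minority (insert k T) - {k} in the_inv_into Y (\<lambda>s. rank s Y) i)"

definition coded :: "nat \<Rightarrow> nat \<Rightarrow> nat set \<Rightarrow> (nat \<Rightarrow> nat) \<Rightarrow> (nat \<times> nat \<Rightarrow> bool list) \<Rightarrow> bool list" where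
  "coded b s S d V = xor_sum b (S - {s}) (\<lambda>k. V (d k, pkt_num (carried_packet s S k)))"

definition enc :: "nat \<Rightarrow> nat \<Rightarrow> (nat \<Rightarrow> nat) \<Rightarrow> (nat \<times> nat \<Rightarrow> bool list) \<Rightarrow> bool list list" where
  "enc b s d V = map (\<lambda>q. coded b s (msg s q) d V) [0..<card (sent s)]"

definition dec :: "nat \<Rightarrow> nat \<Rightarrow> (nat \<Rightarrow> nat) \<Rightarrow> (nat \<times> nat \<Rightarrow> bool list)
    \<Rightarrow> (nat \<Rightarrow> bool list list) \<Rightarrow> nat \<Rightarrow> bool list" where
  "dec b k d V R j = (case pkt j of (T, i) \<Rightarrow>
     if k \<in> T then V (d k, j)
     else let S = insert k T; s = sender k T i
          in xor_list (R s ! msg_index s S) (xor_sum b (S - {s} - {k}) (\<lambda>k'. V (d k', pkt_num (carried_packet s S k')))))"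

lemma msg_msg_index:
  assumes "S \<in> sent s"
  shows "msg_index s S < card (sent s)" "msg s (msg_index s S) = S"
proof -
  have "finite (sent s)"
    using finite_user_sets by (simp add: sent_def)
  then have bij: "bij_betw (msg s) {..<card (sent s)} (sent s)"
    unfolding msg_def by (intro bij_betw_some_bij) auto
  show "msg_index s S < card (sent s)" "msg s (msg_index s S) = S"
    unfolding msg_index_def using the_inv_into_bij_betw[OF bij assms] by auto
qed

lemma carried_packet_in_packets:
  assumes "S \<in> user_sets (Suc t)" "s \<in> minority S" "k \<in> S" "k \<noteq> s"
  shows "carried_packet s S k \<in> packets"
proof -
  have "S - {k} \<in> user_sets t"
    using assms user_setsD[OF assms(1)] by (auto simp: user_sets_def)
  moreover have "rank s (minority S - {k}) < card (minority (S - {k}))"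
  proof -
    have "finite (minority S - {k})"
      using user_setsD(3)[OF assms(1)] by (simp add: minority_def)
    then have "rank s (minority S - {k}) < card (minority S - {k})"
      using bij_betwE[OF bij_betw_rank] assms(2,4) by blast
    then show ?thesis
      using card_minority_Diff[OF assms(1,3)] by simp
  qed
  ultimately show ?thesis
    by (simp add: carried_packet_def packets_def)
qed

lemma sender_spec:
  assumes "(T, i) \<in> packets" "k \<in> {1..K}" "k \<notin> T"
  defines "S \<equiv> insert k T" and "s \<equiv> sender k T i"
  shows "s \<in> minority S" "s \<noteq> k" "S \<in> sent s" "carried_packet s S k = (T, i)"
proof -
  have T: "T \<in> user_sets t" and i: "i < card (minority T)"
    using assms(1) by (auto simp: packets_def)
  have S: "S \<in> user_sets (Suc t)"
    using assms(2,3) user_setsD[OF T] by (simp add: S_def user_sets_def)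
  define Y where "Y = minority S - {k}"
  have "finite Y"
    using user_setsD(3)[OF S] by (simp add: Y_def minority_def)
  then have bij: "bij_betw (\<lambda>s. rank s Y) Y {..<card Y}"
    by (rule bij_betw_rank)
  have "card Y = card (minority T)"
    using card_minority_Diff[OF S] assms(3) by (simp add: Y_def S_def)
  then have "i \<in> {..<card Y}"
    using i by simp
  then have "s \<in> Y" "rank s Y = i"
    unfolding s_def sender_def Let_def S_def[symmetric] Y_def[symmetric]
    using the_inv_into_bij_betw[OF bij] by simp_all
  then show "s \<in> minority S" "s \<noteq> k" "S \<in> sent s" "carried_packet s S k = (T, i)"
    using S assms(3) by (auto simp: Y_def sent_def carried_packet_def S_def)
qed

lemma xor_sum_cached:
  assumes "S \<in> user_sets (Suc t)" "s \<in> minority S" "u \<in> S" "A \<subseteq> S - {s} - {u}"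
    and "\<forall>k\<in>{1..K}. d k \<in> {1..N}"
  shows "xor_sum b A (\<lambda>k. restrict W (cache N u) (d k, pkt_num (carried_packet s S k)))
       = xor_sum b A (\<lambda>k. W (d k, pkt_num (carried_packet s S k)))"
proof (rule xor_sum_cong)
  fix k assume "k \<in> A"
  then have "k \<in> S" "k \<noteq> s" "u \<in> fst (carried_packet s S k)"
    using assms(3,4) by (auto simp: carried_packet_def)
  moreover have "d k \<in> {1..N}"
    using \<open>k \<in> S\<close> assms(5) user_setsD(1)[OF assms(1)] by blast
  ultimately have "carried_packet s S k \<in> packets" "u \<in> fst (carried_packet s S k)" "d k \<in> {1..N}"
    using carried_packet_in_packets[OF assms(1,2)] by auto
  then show "restrict W (cache N u) (d k, pkt_num (carried_packet s S k)) = W (d k, pkt_num (carried_packet s S k))"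
    using cached_packet by simp
qed

lemma dec_correct:
  assumes d: "d \<in> demands N K" and W: "W \<in> contents N F b" and k: "k \<in> {1..K}" and j: "j \<in> {1..F}"
  shows "dec b k d (restrict W (cache N k))
           (\<lambda>k'. if k' \<in> {1..K} - {k} then enc b k' d (restrict W (cache N k')) else []) j
         = W (d k, j)"
proof -
  have dK: "\<forall>u\<in>{1..K}. d u \<in> {1..N}"
    using d by (auto simp: demands_def)
  obtain T i where Ti: "pkt j = (T, i)"
    by (cases "pkt j")
  have P: "(T, i) \<in> packets"
    using pkt_in_packets[OF j] Ti by simp
  show ?thesis
  proof (cases "k \<in> T")
    case True
    then have "(d k, j) \<in> cache N k"
      using dK k j Ti by (auto simp: cache_def)
    then show ?thesis
      using True Ti by (simp add: dec_def)
  next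
    case False
    define S where "S = insert k T"
    define s where "s = sender k T i"
    have s: "s \<in> minority S" "s \<noteq> k" "S \<in> sent s" "carried_packet s S k = (T, i)"
      using sender_spec[OF P k False] by (simp_all add: S_def s_def)
    have S: "S \<in> user_sets (Suc t)" "k \<in> S" "s \<in> S"
      using s(1,3) minority_subset by (auto simp: sent_def S_def)
    have s_K: "s \<in> {1..K} - {k}"
      using S(3) s(2) user_setsD(1)[OF S(1)] by auto
    have dec_unfold: "dec b k d V R j
        = xor_list (R s ! msg_index s S) (xor_sum b (S - {s} - {k}) (\<lambda>k'. V (d k', pkt_num (carried_packet s S k'))))"
      for V R
      using False by (simp add: dec_def Ti S_def s_def Let_def)
    let ?w = "\<lambda>k'. W (d k', pkt_num (carried_packet s S k'))"
    have "enc b s d (restrict W (cache N s)) ! msg_index s S = coded b s S d (restrict W (cache N s))"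
      using msg_msg_index[OF s(3)] by (simp add: enc_def)
    also have "\<dots> = xor_sum b (S - {s}) ?w"
      unfolding coded_def using xor_sum_cached[OF S(1) s(1) S(3) _ dK] by simp
    finally have received: "enc b s d (restrict W (cache N s)) ! msg_index s S = xor_sum b (S - {s}) ?w" .
    have known: "xor_sum b (S - {s} - {k}) (\<lambda>k'. restrict W (cache N k) (d k', pkt_num (carried_packet s S k')))
        = xor_sum b (S - {s} - {k}) ?w"
      using xor_sum_cached[OF S(1) s(1) S(2) subset_refl dK] .
    have w_k: "?w k = W (d k, j)"
      using s(4) pkt_num_pkt[OF j] Ti by simp
    have "dec b k d (restrict W (cache N k))
           (\<lambda>k'. if k' \<in> {1..K} - {k} then enc b k' d (restrict W (cache N k')) else []) j
        = xor_list (xor_sum b (S - {s}) ?w) (xor_sum b (S - {s} - {k}) ?w)"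
      using s_K received known by (simp add: dec_unfold)
    also have "\<dots> = ?w k"
      using user_setsD(3)[OF S(1)] S(2) s(2) w_k W dK k j
      by (intro xor_sum_remove) (auto simp: contents_def)
    finally show ?thesis
      using w_k by simp
  qed
qed

lemma d2d_scheme_cache:
  assumes "real K * M = real t * real N"
  shows "d2d_scheme N K M F b (cache N) (\<lambda>k d. card (sent k)) (enc b) (dec b)"
  unfolding d2d_scheme_def
  using card_cache_eq[OF assms] dec_correct by (auto simp: cache_def enc_def coded_def xor_sum_def)

lemma d2d_rate_cache:
  assumes "1 \<le> N"
  shows "d2d_rate N K F (\<lambda>k d. card (sent k)) = real K / real t - 1"
proof -
  have "demands N K \<noteq> {}"
    using assms by (simp add: demands_def PiE_eq_empty_iff)
  then have rate: "d2d_rate N K F (\<lambda>k d. card (sent k)) = real (\<Sum>k\<in>{1..K}. card (sent k)) / real F"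
    by (simp add: d2d_rate_def image_constant_conv)
  have "real t * real (\<Sum>k\<in>{1..K}. card (sent k)) = (real K - real t) * real F"
    using t_sum_card_sent t_le_K by (metis of_nat_diff of_nat_mult)
  then show ?thesis
    unfolding rate using F_pos t_ge_2 by (simp add: field_simps)
qed

lemma d2d_achievable_cache:
  assumes "1 \<le> N" "real K * M = real t * real N"
  shows "d2d_achievable N K M F (real K / real t - 1)"
  unfolding d2d_achievable_def using d2d_scheme_cache[OF assms(2)] d2d_rate_cache[OF assms(1)] by blast

end

theorem theorem2:
  fixes N K t :: nat and M :: real
  assumes "N \<ge> 1" and "K \<ge> 2" and "0 < M" and "M \<le> real N"
    and "real t = real K * M / real N" and "t > 0"
    and "even K" and "even t" and "2 \<le> t" and "t \<le> K"
  shows "\<exists>F::nat. F \<ge> 1 \<and> real F \<le> (1/2) * real (t * (K choose t)) \<and>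
           d2d_achievable N K M F (real N / M - 1)"
proof -
  interpret two_group_scheme K t
    using assms by unfold_locales
  have memory: "real K * M = real t * real N"
    using assms(1,5) by (simp add: field_simps)
  then have "real N / M = real K / real t"
    using assms(3,6) by (simp add: field_simps)
  then have "d2d_achievable N K M F (real N / M - 1)"
    using d2d_achievable_cache[OF assms(1) memory] by simp
  moreover have "real F \<le> (1/2) * real (t * (K choose t))"
    using of_nat_mono[OF F_le, where 'a = real] by simp
  ultimately show ?thesis
    using F_pos by blast
qed

end
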